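(* Let $\Delta:M_n\to M_n$ be a weak-2-local derivation which is symmetric (i.e. $\Delta(a^* )^*=\Delta(a)$ for all $a\in M_n$), let $p_1,\ldots,p_n$ be mutually orthogonal minimal projections in $M_n$ and $q=1-p_n$. Suppose $\Delta(qaq)=0$ for every $a\in M_n$ and $\Delta(e_{1n})=0$. Then $\Delta\equiv 0$.
   Context: $M_n=M_n(\mathbb{C})$. For $i,j$, $e_{ij}$ is the unique minimal partial isometry in $M_n$ with $e_{ij}^*e_{ij}=p_j$ and $e_{ij}e_{ij}^*=p_i$. A derivation on $M_n$ is a linear map $D$ with $D(ab)=D(a)b+aD(b)$. A (not necessarily linear) map $\Delta:M_n\to M_n$ is a weak-2-local derivation if for every $a,b\in M_n$ and every $\phi\in M_n^*$ there exists a derivation $D_{a,b,\phi}$ such that $\phi\Delta(a)=\phi D_{a,b,\phi}(a)$ and $\phi\Delta(b)=\phi D_{a,b,\phi}(b)$. *)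

theory Defs
  imports "HOL-Analysis.Analysis"
begin

text \<open>M_n(C) is rendered as the type complex^'n^'n (n = CARD('n)).\<close>

type_synonym 'n cmat = "complex ^'n ^'n"

definition cadj :: "'n::finite cmat \<Rightarrow> 'n cmat" where
  "cadj A = (\<chi> i j. cnj (A $ j $ i))"

definition is_projection :: "'n::finite cmat \<Rightarrow> bool" where
  "is_projection p \<longleftrightarrow> p ** p = p \<and> cadj p = p"

definition minimal_projection :: "'n::finite cmat \<Rightarrow> bool" where
  "minimal_projection p \<longleftrightarrow> is_projection p \<and> p \<noteq> 0 \<and>
     (\<forall>r. is_projection r \<and> r ** p = r \<longrightarrow> r = 0 \<or> r = p)"

definition cscale :: "complex \<Rightarrow> 'n::finite cmat \<Rightarrow> 'n cmat" where
  "cscale c A = (\<chi> i j. c * A $ i $ j)"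

definition is_derivation :: "('n::finite cmat \<Rightarrow> 'n cmat) \<Rightarrow> bool" where
  "is_derivation D \<longleftrightarrow> Vector_Spaces.linear cscale cscale D \<and>
     (\<forall>a b. D (a ** b) = D a ** b + a ** D b)"

definition weak_2_local_derivation :: "('n::finite cmat \<Rightarrow> 'n cmat) \<Rightarrow> bool" where
  "weak_2_local_derivation \<Delta> \<longleftrightarrow>
     (\<forall>a b (\<phi>::'n cmat \<Rightarrow> complex). Vector_Spaces.linear cscale (*) \<phi> \<longrightarrow>
        (\<exists>D. is_derivation D \<and> \<phi> (\<Delta> a) = \<phi> (D a) \<and> \<phi> (\<Delta> b) = \<phi> (D b)))"

end

theory Submission
  imports Defs
begin

text \<open>
  Pairing with the functionals \<open>\<phi> = trace (Y ** \<cdot>)\<close> turns weak-2-locality into trace identities.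
  Every derivation of \<open>M\<^sub>n\<close> has trace zero, so \<open>trace (g D g) = trace (g\<^sup>2 D g) = 0\<close>;
  comparing \<open>\<Delta>\<close> at \<open>a\<close> and \<open>b\<close> with one derivation \<open>D\<close> evaluated at \<open>g = a - c b\<close> then shows that,
  whenever \<open>\<Delta> b = 0\<close>, both \<open>b\<close> and the Jordan product \<open>a b + b a\<close> are trace-orthogonal to \<open>\<Delta> a\<close>.

  With \<open>P = p\<^sub>n\<close> of rank one and \<open>q = 1 - P\<close>, orthogonality to all of \<open>q M\<^sub>n q\<close> kills the
  diagonal corners \<open>q \<Delta>(a) q\<close> and \<open>P \<Delta>(a) P\<close> of every \<open>\<Delta> a\<close>. If in addition
  \<open>trace (e\<^sub>1\<^sub>n a)\<close> and \<open>trace (e\<^sub>1\<^sub>n\<^sup>* a)\<close> are nonzero, multiplying the Jordan identity for the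
  elements \<open>q x q\<close> by \<open>e\<^sub>1\<^sub>n\<close> and \<open>e\<^sub>1\<^sub>n\<^sup>*\<close> kills the off-diagonal corners, so \<open>\<Delta> a = 0\<close>.
  Every matrix differs from such an element by a combination of \<open>e\<^sub>1\<^sub>n\<close> and \<open>e\<^sub>1\<^sub>n\<^sup>*\<close>, which
  are zeros of \<open>\<Delta>\<close> (the latter by symmetry); hence \<open>\<Delta> a\<close> is trace-orthogonal to everything.
\<close>

section \<open>Matrix algebra\<close>

lemma matrix_add_rdistrib: "((A::'a::semiring_1^'n^'m) + B) ** C = A ** C + B ** C"
  by (vector matrix_matrix_mult_def sum.distrib[symmetric] field_simps)

lemma matrix_diff_ldistrib: "(A::'a::comm_ring_1^'n^'m) ** (B - C) = A ** B - A ** C"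
  by (vector matrix_matrix_mult_def sum_subtractf[symmetric] field_simps)

lemma matrix_diff_rdistrib: "((A::'a::comm_ring_1^'n^'m) - B) ** C = A ** C - B ** C"
  by (vector matrix_matrix_mult_def sum_subtractf[symmetric] field_simps)

lemma trace_zero [simp]: "trace (0::'a::semiring_1^'n^'n) = 0"
  by (simp add: trace_def)

lemma trace_sum: "trace (sum f S :: 'a::comm_semiring_1^'n^'n) = (\<Sum>x\<in>S. trace (f x))"
  by (induction S rule: infinite_finite_induct) (auto simp: trace_add)

lemma trace_sandwich:
  "trace (Y ** (A ** X ** B)) = trace ((B ** Y ** A) ** (X::'a::comm_semiring_1^'n^'n))"
  using trace_mul_sym[of "Y ** A ** X" B] by (simp add: matrix_mul_assoc)

lemma matrix_card_1_eq_mat_trace: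
  assumes "CARD('n) = 1"
  shows "(A::'a::semiring_1^'n^'n) = mat (trace A)"
proof -
  obtain k :: 'n where k: "UNIV = {k}"
    using assms card_1_singletonE by blast
  then have "i = k" for i :: 'n
    by blast
  then show ?thesis
    by (simp add: vec_eq_iff mat_def trace_def k) metis
qed

lemma cscale_add: "cscale c (A + B) = cscale c A + cscale c B"
  by (simp add: cscale_def vec_eq_iff algebra_simps)

lemma cscale_left_distrib: "cscale (c + d) A = cscale c A + cscale d A"
  by (simp add: cscale_def vec_eq_iff algebra_simps)

lemma cscale_0_left [simp]: "cscale 0 A = 0"
  by (simp add: cscale_def vec_eq_iff)

lemma cscale_one [simp]: "cscale 1 A = A"
  by (simp add: cscale_def vec_eq_iff)

lemma cscale_minus_one: "cscale (-1) A = - A"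
  by (simp add: cscale_def vec_eq_iff)

lemma cscale_cscale [simp]: "cscale c (cscale d A) = cscale (c * d) A"
  by (simp add: cscale_def vec_eq_iff)

lemma cscale_eq_0_iff [simp]: "cscale c A = 0 \<longleftrightarrow> c = 0 \<or> A = 0"
  by (auto simp: cscale_def vec_eq_iff)

lemma matrix_mul_cscale_left: "cscale c A ** B = cscale c (A ** B)"
  by (simp add: cscale_def matrix_matrix_mult_def vec_eq_iff sum_distrib_left mult.assoc)

lemma matrix_mul_cscale_right: "A ** cscale c B = cscale c (A ** B)"
  by (simp add: cscale_def matrix_matrix_mult_def vec_eq_iff sum_distrib_left mult_ac)

lemma trace_cscale: "trace (cscale c A) = c * trace A"
  by (simp add: cscale_def trace_def sum_distrib_left)

lemma vector_space_cscale: "vector_space (cscale :: complex \<Rightarrow> 'n::finite cmat \<Rightarrow> 'n cmat)"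
  by unfold_locales (simp_all add: cscale_add cscale_left_distrib)

lemma linear_trace_mult_left:
  "Vector_Spaces.linear cscale (*) (\<lambda>X::'n::finite cmat. trace (Y ** X))"
proof -
  have "vector_space ((*) :: complex \<Rightarrow> complex \<Rightarrow> complex)"
    by unfold_locales (simp_all add: algebra_simps)
  then show ?thesis
    by (simp add: Vector_Spaces.linear_iff vector_space_cscale matrix_add_ldistrib trace_add
        matrix_mul_cscale_right trace_cscale)
qed

definition matrix_unit :: "'n::finite \<Rightarrow> 'n \<Rightarrow> 'n cmat" where
  "matrix_unit i j = (\<chi> a b. of_bool (a = i) * of_bool (b = j))"

lemma matrix_unit_mult:
  "matrix_unit i k ** matrix_unit k' j = (if k = k' then matrix_unit i j else 0)"
  by (auto simp: matrix_unit_def matrix_matrix_mult_def vec_eq_iff)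

lemma matrix_unit_expansion: "A = (\<Sum>i\<in>UNIV. \<Sum>j\<in>UNIV. cscale (A $ i $ j) (matrix_unit i j))"
  unfolding vec_eq_iff matrix_unit_def cscale_def
  by (simp add: mult.assoc[symmetric] flip: sum_distrib_right)

lemma matrix_unit_sandwich:
  "matrix_unit j j ** A ** matrix_unit j j = cscale (A $ j $ j) (matrix_unit j j)"
  by (simp add: matrix_unit_def matrix_matrix_mult_def vec_eq_iff cscale_def)

lemma trace_matrix_unit_mult: "trace (matrix_unit j i ** X) = X $ i $ j"
  by (simp add: trace_def matrix_unit_def matrix_matrix_mult_def mult.assoc if_distrib cong: if_cong)

lemma trace_mult_eq_0_imp_zero: "(\<And>Y. trace (Y ** X) = 0) \<Longrightarrow> (X::'n::finite cmat) = 0"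
  by (metis trace_matrix_unit_mult vec_eq_iff zero_index)

lemma cadj_mult: "cadj (A ** B) = cadj B ** cadj (A::'n::finite cmat)"
  by (simp add: cadj_def matrix_matrix_mult_def vec_eq_iff mult.commute)

lemma cadj_cadj [simp]: "cadj (cadj A) = A"
  by (simp add: cadj_def vec_eq_iff)

lemma cadj_diff: "cadj (A - B) = cadj A - cadj B"
  by (simp add: cadj_def vec_eq_iff)

lemma cadj_zero [simp]: "cadj 0 = 0"
  by (simp add: cadj_def vec_eq_iff)

lemma cadj_cscale: "cadj (cscale c A) = cscale (cnj c) (cadj A)"
  by (simp add: cadj_def cscale_def vec_eq_iff)

lemma cadj_matrix_unit_diag [simp]: "cadj (matrix_unit j j) = matrix_unit j j"
  by (simp add: cadj_def matrix_unit_def vec_eq_iff)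

lemma diag_cadj_mult_self: "(cadj A ** A) $ j $ j = of_real (\<Sum>k\<in>UNIV. (cmod (A $ k $ j))\<^sup>2)"
  unfolding of_real_sum complex_norm_square
  by (simp add: cadj_def matrix_matrix_mult_def mult.commute)

lemma cadj_mult_self_diag_eq_0_imp_zero:
  assumes "\<And>j. (cadj A ** A) $ j $ j = 0"
  shows "(A::'n::finite cmat) = 0"
proof -
  have "(\<Sum>k\<in>UNIV. (cmod (A $ k $ j))\<^sup>2) = 0" for j
    using assms[of j] by (simp only: diag_cadj_mult_self of_real_eq_0_iff)
  then show ?thesis
    by (simp add: vec_eq_iff sum_nonneg_eq_0_iff)
qed

lemma partial_isometry_mult_right:
  assumes "cadj e ** e = p" "is_projection p"
  shows "e ** p = e"
proof -
  have p: "p ** p = p" "cadj p = p"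
    using assms(2) by (simp_all add: is_projection_def)
  have "p ** cadj e ** e = p"
    by (simp add: matrix_mul_assoc[symmetric] assms(1) p(1))
  then have "cadj (e - e ** p) ** (e - e ** p) = 0"
    by (simp add: cadj_diff cadj_mult matrix_diff_ldistrib matrix_diff_rdistrib matrix_mul_assoc
        assms(1) p)
  then show ?thesis
    using cadj_mult_self_diag_eq_0_imp_zero[of "e - e ** p"] by simp
qed

lemma partial_isometry_orthogonal_ranges:
  assumes "cadj e ** e = p" "e ** cadj e = p'" "is_projection p" "is_projection p'" "p ** p' = 0"
  shows "e ** p = e" "p ** e = 0"
proof -
  show "e ** p = e"
    using partial_isometry_mult_right assms(1,3) .
  have "cadj e ** p' = cadj e"
    using partial_isometry_mult_right[of "cadj e" p'] assms(2,4) by simp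
  then have "p' ** e = e"
    using assms(4) by (metis cadj_cadj cadj_mult is_projection_def)
  then show "p ** e = 0"
    by (metis assms(5) matrix_mul_assoc times0_left)
qed

section \<open>Minimal projections have rank one\<close>

lemma projection_diag_nonzero:
  assumes "is_projection p" "p \<noteq> 0"
  obtains j where "p $ j $ j \<noteq> 0"
  using assms cadj_mult_self_diag_eq_0_imp_zero[of p] by (auto simp: is_projection_def)

lemma minimal_projection_eq_compression:
  assumes mp: "minimal_projection p" and d: "p $ j $ j \<noteq> 0"
  shows "p = cscale (1 / p $ j $ j) (p ** matrix_unit j j ** p)"
proof -
  let ?E = "matrix_unit j j" and ?d = "p $ j $ j"
  define r where "r = cscale (1 / ?d) (p ** ?E ** p)"
  have pp: "p ** p = p" and pa: "cadj p = p"
    using mp by (simp_all add: minimal_projection_def is_projection_def)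
  have "cnj ?d = ?d"
    using arg_cong[OF pa, of "\<lambda>A. A $ j $ j"] by (simp add: cadj_def)
  then have "cadj r = r"
    by (simp add: r_def cadj_cscale cadj_mult pa matrix_mul_assoc)
  moreover have "r ** r = r"
  proof -
    have "r ** r = cscale (1 / ?d * (1 / ?d)) (p ** (?E ** (p ** p) ** ?E) ** p)"
      by (simp add: r_def matrix_mul_cscale_left matrix_mul_cscale_right matrix_mul_assoc)
    also have "\<dots> = r"
      using d by (simp add: pp matrix_unit_sandwich matrix_mul_cscale_left matrix_mul_cscale_right r_def)
    finally show ?thesis .
  qed
  moreover have "r ** p = r"
    by (simp add: r_def matrix_mul_cscale_left matrix_mul_assoc[symmetric] pp)
  moreover have "trace r = 1"
  proof -
    have "trace (p ** ?E ** p) = trace (?E ** p)"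
      using trace_mul_sym[of p "?E ** p"] by (simp add: matrix_mul_assoc[symmetric] pp)
    then show ?thesis
      using d by (simp add: r_def trace_cscale trace_matrix_unit_mult)
  qed
  ultimately have "r = p"
    using mp by (auto simp: minimal_projection_def is_projection_def)
  then show ?thesis
    by (simp add: r_def)
qed

lemma minimal_projection_trace:
  assumes mp: "minimal_projection p"
  shows "trace p = 1"
proof -
  obtain j where d: "p $ j $ j \<noteq> 0"
    using mp projection_diag_nonzero by (auto simp: minimal_projection_def)
  have "trace (p ** matrix_unit j j ** p) = trace (matrix_unit j j ** p)"
    using mp trace_mul_sym[of p "matrix_unit j j ** p"]
    by (simp add: matrix_mul_assoc[symmetric] minimal_projection_def is_projection_def)
  then have "trace p = 1 / p $ j $ j * trace (matrix_unit j j ** p)"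
    by (subst (1) minimal_projection_eq_compression[OF mp d]) (simp add: trace_cscale)
  then show ?thesis
    using d by (simp add: trace_matrix_unit_mult)
qed

lemma minimal_projection_sandwich:
  assumes mp: "minimal_projection p"
  shows "p ** x ** p = cscale (trace (p ** x)) p"
proof -
  obtain j where d: "p $ j $ j \<noteq> 0"
    using mp projection_diag_nonzero by (auto simp: minimal_projection_def)
  let ?E = "matrix_unit j j" and ?d = "p $ j $ j"
  have pp: "p ** p = p"
    using mp by (simp add: minimal_projection_def is_projection_def)
  have p: "p = cscale (1 / ?d) (p ** ?E ** p)"
    by (rule minimal_projection_eq_compression[OF mp d])
  have "p ** x ** p = cscale (1 / ?d * (1 / ?d)) (p ** (?E ** (p ** x ** p) ** ?E) ** p)"
    by (subst (1 2) p) (simp add: matrix_mul_cscale_left matrix_mul_cscale_right matrix_mul_assoc)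
  also have "\<dots> = cscale ((p ** x ** p) $ j $ j / ?d) p"
    by (subst (3) p) (simp add: matrix_unit_sandwich matrix_mul_cscale_left matrix_mul_cscale_right)
  finally have c: "p ** x ** p = cscale ((p ** x ** p) $ j $ j / ?d) p" .
  have "trace (p ** x) = trace (p ** x ** p)"
    using trace_mul_sym[of p "p ** x"] by (simp add: matrix_mul_assoc pp)
  also have "\<dots> = (p ** x ** p) $ j $ j / ?d"
    by (subst c) (simp add: trace_cscale minimal_projection_trace[OF mp])
  finally show ?thesis
    using c by simp
qed

section \<open>Derivations and weak-2-local derivations\<close>

lemma derivation_linear: "is_derivation D \<Longrightarrow> Vector_Spaces.linear cscale cscale D"
  by (simp add: is_derivation_def)

lemma derivation_mult: "is_derivation D \<Longrightarrow> D (a ** b) = D a ** b + a ** D b"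
  by (simp add: is_derivation_def)

lemma derivation_trace_idempotent:
  assumes D: "is_derivation D" and r: "r ** r = r"
  shows "trace (D r) = 0"
proof -
  have Dr: "D r = D r ** r + r ** D r"
    using derivation_mult[OF D, of r r] r by simp
  have "r ** D r = r ** D r ** r + r ** D r"
    by (subst (1) Dr) (simp add: matrix_add_ldistrib matrix_mul_assoc r)
  then have "r ** D r ** r = 0"
    by simp
  moreover have "trace (r ** D r) = trace (r ** D r ** r)"
    using trace_mul_sym[of "r ** D r" r] by (simp add: matrix_mul_assoc r)
  ultimately show ?thesis
    by (subst Dr) (simp add: trace_add trace_mul_sym[of "D r" r])
qed

lemma derivation_trace_matrix_unit:
  assumes D: "is_derivation D"
  shows "trace (D (matrix_unit i j)) = 0"
proof (cases "i = j")
  case True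
  then show ?thesis
    by (simp add: derivation_trace_idempotent[OF D] matrix_unit_mult)
next
  case False
  interpret D: Vector_Spaces.linear cscale cscale D
    by (rule derivation_linear[OF D])
  let ?r = "matrix_unit i i + matrix_unit i j"
  have "?r ** ?r = ?r"
    using False by (simp add: matrix_add_ldistrib matrix_add_rdistrib matrix_unit_mult)
  moreover have "trace (D (matrix_unit i j)) = trace (D ?r) - trace (D (matrix_unit i i))"
    by (simp add: D.add trace_add)
  ultimately show ?thesis
    by (simp add: derivation_trace_idempotent[OF D] matrix_unit_mult)
qed

lemma derivation_trace_eq_0:
  assumes D: "is_derivation D"
  shows "trace (D x) = 0"
proof -
  interpret D: Vector_Spaces.linear cscale cscale D
    by (rule derivation_linear[OF D])
  have "trace (D x) = (\<Sum>i\<in>UNIV. \<Sum>j\<in>UNIV. x $ i $ j * trace (D (matrix_unit i j)))"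
    by (subst matrix_unit_expansion) (simp add: D.sum D.scale trace_sum trace_cscale)
  then show ?thesis
    by (simp add: derivation_trace_matrix_unit[OF D])
qed

lemma derivation_trace_mult_self:
  assumes D: "is_derivation D"
  shows "trace (g ** D g) = 0"
proof -
  have "0 = trace (D (g ** g))"
    by (simp add: derivation_trace_eq_0[OF D])
  also have "\<dots> = 2 * trace (g ** D g)"
    by (simp add: derivation_mult[OF D] trace_add trace_mul_sym[of "D g"])
  finally show ?thesis
    by simp
qed

lemma derivation_trace_square_mult:
  assumes D: "is_derivation D"
  shows "trace ((g ** g) ** D g) = 0"
proof -
  have "0 = trace (D (g ** (g ** g)))"
    by (simp add: derivation_trace_eq_0[OF D])
  also have "\<dots> = trace (D g ** (g ** g)) + trace (g ** (D g ** g)) + trace (g ** (g ** D g))"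
    by (simp add: derivation_mult[OF D] trace_add matrix_add_ldistrib)
  also have "\<dots> = 3 * trace ((g ** g) ** D g)"
    using trace_mul_sym[of "D g" "g ** g"] trace_mul_sym[of g "D g ** g"]
    by (simp add: matrix_mul_assoc)
  finally show ?thesis
    by simp
qed

lemma weak_2_local_derivation_traceE:
  assumes "weak_2_local_derivation \<Delta>"
  obtains D where "is_derivation D"
    "trace (Y ** \<Delta> a) = trace (Y ** D a)" "trace (Y ** \<Delta> b) = trace (Y ** D b)"
  using assms linear_trace_mult_left[of Y] unfolding weak_2_local_derivation_def by blast

lemma weak_2_local_derivation_trace_eq_0:
  assumes "weak_2_local_derivation \<Delta>"
  shows "trace (\<Delta> a) = 0"
proof -
  obtain D where "is_derivation D" "trace (mat 1 ** \<Delta> a) = trace (mat 1 ** D a)"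
    using weak_2_local_derivation_traceE[OF assms] by metis
  then show ?thesis
    by (simp add: derivation_trace_eq_0)
qed

lemma weak_2_local_derivation_shiftE:
  assumes w: "weak_2_local_derivation \<Delta>" and b: "\<Delta> b = 0"
  obtains D where "is_derivation D" "trace (Y ** \<Delta> a) = trace (Y ** D (a - cscale c b))"
proof -
  obtain D where D: "is_derivation D"
    and a: "trace (Y ** \<Delta> a) = trace (Y ** D a)" and "trace (Y ** \<Delta> b) = trace (Y ** D b)"
    using weak_2_local_derivation_traceE[OF w] .
  then have "trace (Y ** D b) = 0"
    using b by simp
  interpret D: Vector_Spaces.linear cscale cscale D
    by (rule derivation_linear[OF D])
  have "trace (Y ** D (a - cscale c b)) = trace (Y ** D a) - c * trace (Y ** D b)"
    by (simp add: D.diff D.scale matrix_diff_ldistrib trace_sub matrix_mul_cscale_right trace_cscale)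
  then show ?thesis
    using that D a \<open>trace (Y ** D b) = 0\<close> by simp
qed

lemma weak_2_local_derivation_orth_zeros:
  assumes w: "weak_2_local_derivation \<Delta>" and b: "\<Delta> b = 0"
  shows "trace (b ** \<Delta> a) = 0"
proof -
  have "trace ((a - cscale c b) ** \<Delta> a) = 0" for c
    using weak_2_local_derivation_shiftE[OF w b] derivation_trace_mult_self by metis
  from this[of 0] this[of 1] show ?thesis
    by (simp add: matrix_diff_rdistrib trace_sub)
qed

lemma weak_2_local_derivation_orth_jordan_zeros:
  assumes w: "weak_2_local_derivation \<Delta>" and b: "\<Delta> b = 0"
  shows "trace ((a ** b + b ** a) ** \<Delta> a) = 0"
proof -
  have sq: "trace (((a - cscale c b) ** (a - cscale c b)) ** \<Delta> a) = 0" for c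
    using weak_2_local_derivation_shiftE[OF w b] derivation_trace_square_mult by metis
  have "trace (((a - b) ** (a - b)) ** \<Delta> a) - trace (((a + b) ** (a + b)) ** \<Delta> a)
      = - 2 * trace ((a ** b + b ** a) ** \<Delta> a)"
    by (simp add: matrix_add_ldistrib matrix_add_rdistrib matrix_diff_ldistrib matrix_diff_rdistrib
        trace_add trace_sub algebra_simps)
  then show ?thesis
    using sq[of 1] sq[of "-1"] by (simp add: cscale_minus_one)
qed

section \<open>Vanishing from a rank-one corner\<close>

text \<open>In the application \<open>P = p\<^sub>n\<close>, \<open>e = e\<^sub>1\<^sub>n\<close> and \<open>f = e\<^sub>1\<^sub>n\<^sup>*\<close>.\<close>

locale weak_2_local_derivation_rank_one_corner =
  fixes \<Delta> :: "'n::finite cmat \<Rightarrow> 'n cmat" and P q e f :: "'n cmat"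
  assumes weak_2_local: "weak_2_local_derivation \<Delta>"
    and idem: "P ** P = P"
    and rank_one: "\<And>x. P ** x ** P = cscale (trace (P ** x)) P"
    and complement: "P + q = mat 1"
    and corner_zero: "\<And>x. \<Delta> (q ** x ** q) = 0"
    and e_range: "e ** P = e" "P ** e = 0"
    and f_range: "P ** f = f" "f ** P = 0"
    and e_f_zero: "\<Delta> e = 0" "\<Delta> f = 0"
    and trace_e_f: "trace (e ** f) = 1"
begin

lemma q_eq: "q = mat 1 - P"
  using complement by (metis add_diff_cancel_left')

lemma P_q: "P ** q = 0" and q_P: "q ** P = 0" and q_idem: "q ** q = q"
  by (simp_all add: q_eq matrix_diff_ldistrib matrix_diff_rdistrib idem)

lemma q_e: "q ** e = e" and f_q: "f ** q = f"
  by (simp_all add: q_eq matrix_diff_ldistrib matrix_diff_rdistrib e_range f_range)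

lemma P_mult_e: "P ** x ** e = cscale (trace (e ** x)) P"
proof -
  have "P ** x ** e = P ** (x ** e) ** P"
    by (simp add: matrix_mul_assoc[symmetric] e_range)
  also have "\<dots> = cscale (trace (e ** x)) P"
    unfolding rank_one using trace_mul_sym[of "P ** x" e] by (simp add: matrix_mul_assoc e_range)
  finally show ?thesis .
qed

lemma f_mult_P: "f ** x ** P = cscale (trace (f ** x)) P"
proof -
  have "f ** x ** P = P ** (f ** x) ** P"
    by (simp add: matrix_mul_assoc f_range)
  also have "\<dots> = cscale (trace (f ** x)) P"
    unfolding rank_one by (simp add: matrix_mul_assoc f_range)
  finally show ?thesis .
qed

lemma corner_decomposition: "X = P ** X ** P + P ** X ** q + (q ** X ** P + q ** X ** q)"
proof -
  have "X = (P + q) ** X ** (P + q)"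
    by (simp add: complement)
  then show ?thesis
    by (simp add: matrix_add_ldistrib matrix_add_rdistrib add_ac)
qed

lemma image_diagonal_corners: "q ** \<Delta> a ** q = 0" "P ** \<Delta> a ** P = 0"
proof -
  show qXq: "q ** \<Delta> a ** q = 0"
  proof (rule trace_mult_eq_0_imp_zero)
    show "trace (Y ** (q ** \<Delta> a ** q)) = 0" for Y
      unfolding trace_sandwich by (rule weak_2_local_derivation_orth_zeros[OF weak_2_local corner_zero])
  qed
  have "trace (\<Delta> a) = trace ((P + q) ** \<Delta> a)"
    by (simp add: complement)
  also have "\<dots> = trace (P ** \<Delta> a) + trace (q ** \<Delta> a ** q)"
    using trace_mul_sym[of q "q ** \<Delta> a"] by (simp add: matrix_add_rdistrib trace_add matrix_mul_assoc q_idem)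
  finally show "P ** \<Delta> a ** P = 0"
    by (simp add: rank_one qXq weak_2_local_derivation_trace_eq_0[OF weak_2_local])
qed

lemma image_off_diagonal: "\<Delta> a = P ** \<Delta> a ** q + q ** \<Delta> a ** P"
  using corner_decomposition[of "\<Delta> a"] by (simp add: image_diagonal_corners)

lemma image_mult_e: "\<Delta> a ** e = 0" and f_mult_image: "f ** \<Delta> a = 0"
proof -
  have "\<Delta> a ** e = P ** \<Delta> a ** e"
    by (subst image_off_diagonal) (simp add: matrix_add_rdistrib matrix_mul_assoc[symmetric] q_e e_range)
  then show "\<Delta> a ** e = 0"
    by (simp add: P_mult_e weak_2_local_derivation_orth_zeros[OF weak_2_local e_f_zero(1)])
  have "f ** \<Delta> a = f ** \<Delta> a ** P"
    by (subst image_off_diagonal) (simp add: matrix_add_ldistrib matrix_mul_assoc f_q f_range)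
  then show "f ** \<Delta> a = 0"
    by (simp add: f_mult_P weak_2_local_derivation_orth_zeros[OF weak_2_local e_f_zero(2)])
qed

lemma jordan_corner_vanish: "q ** (\<Delta> a ** a + a ** \<Delta> a) ** q = 0"
proof (rule trace_mult_eq_0_imp_zero)
  fix Y
  let ?B = "q ** Y ** q"
  have "trace (Y ** (q ** (\<Delta> a ** a + a ** \<Delta> a) ** q)) = trace ((a ** ?B + ?B ** a) ** \<Delta> a)"
    unfolding trace_sandwich using trace_mul_sym[of "?B ** \<Delta> a" a]
    by (simp add: matrix_add_ldistrib matrix_add_rdistrib trace_add matrix_mul_assoc add.commute)
  then show "trace (Y ** (q ** (\<Delta> a ** a + a ** \<Delta> a) ** q)) = 0"
    by (simp add: weak_2_local_derivation_orth_jordan_zeros[OF weak_2_local corner_zero])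
qed

lemma image_off_diagonal_mult: "q ** \<Delta> a = q ** \<Delta> a ** P" "\<Delta> a ** q = P ** \<Delta> a ** q"
proof -
  have "q ** \<Delta> a = q ** (P ** \<Delta> a ** q + q ** \<Delta> a ** P)"
    by (subst (1) image_off_diagonal) (rule refl)
  then show "q ** \<Delta> a = q ** \<Delta> a ** P"
    by (simp add: matrix_add_ldistrib matrix_mul_assoc q_P q_idem)
  have "\<Delta> a ** q = (P ** \<Delta> a ** q + q ** \<Delta> a ** P) ** q"
    by (subst (1) image_off_diagonal) (rule refl)
  then show "\<Delta> a ** q = P ** \<Delta> a ** q"
    by (simp add: matrix_add_rdistrib matrix_mul_assoc[symmetric] P_q q_idem)
qed

lemma zero_if_traces_nonzero:
  assumes "trace (e ** a) \<noteq> 0" "trace (f ** a) \<noteq> 0"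
  shows "\<Delta> a = 0"
proof -
  let ?X = "\<Delta> a" and ?M = "\<Delta> a ** a + a ** \<Delta> a"
  have "cscale (trace (e ** a)) (q ** ?X ** P) = q ** ?X ** (P ** a ** e)"
    by (simp add: P_mult_e matrix_mul_cscale_right)
  also have "\<dots> = q ** ?X ** (a ** e)"
    using arg_cong[OF image_off_diagonal_mult(1), of "\<lambda>Y. Y ** (a ** e)"] by (simp add: matrix_mul_assoc)
  also have "\<dots> = q ** ?M ** e"
    by (simp add: matrix_add_ldistrib matrix_add_rdistrib matrix_mul_assoc[symmetric] image_mult_e)
  also have "\<dots> = (q ** ?M ** q) ** e"
    by (simp add: matrix_mul_assoc[symmetric] q_e)
  also have "\<dots> = 0"
    by (simp add: jordan_corner_vanish)
  finally have "q ** ?X ** P = 0"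
    by (simp add: assms(1))
  have "cscale (trace (f ** a)) (P ** ?X ** q) = f ** a ** P ** ?X ** q"
    by (simp add: f_mult_P matrix_mul_cscale_left)
  also have "\<dots> = f ** a ** (?X ** q)"
    using arg_cong[OF image_off_diagonal_mult(2), of "\<lambda>Y. f ** a ** Y"] by (simp add: matrix_mul_assoc)
  also have "\<dots> = f ** ?M ** q"
    by (simp add: matrix_add_ldistrib matrix_add_rdistrib matrix_mul_assoc f_mult_image)
  also have "\<dots> = f ** (q ** ?M ** q)"
    by (simp add: matrix_mul_assoc f_q)
  also have "\<dots> = 0"
    by (simp add: jordan_corner_vanish)
  finally have "P ** ?X ** q = 0"
    by (simp add: assms(2))
  with \<open>q ** ?X ** P = 0\<close> show ?thesis
    by (subst image_off_diagonal) simp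
qed

lemma vanishes: "\<Delta> a = 0"
proof (rule trace_mult_eq_0_imp_zero)
  fix m
  define b where "b = m + cscale (1 - trace (f ** m)) e + cscale (1 - trace (e ** m)) f"
  have "e ** e = 0"
    by (subst (1) e_range(1)[symmetric]) (simp add: matrix_mul_assoc[symmetric] e_range(2))
  moreover have "f ** f = 0"
    by (subst (2) f_range(1)[symmetric]) (simp add: matrix_mul_assoc f_range(2))
  ultimately have "trace (e ** b) = 1" "trace (f ** b) = 1"
    using trace_e_f trace_mul_sym[of e f]
    by (simp_all add: b_def matrix_add_ldistrib matrix_mul_cscale_right trace_add trace_cscale)
  then have "trace (b ** \<Delta> a) = 0"
    using weak_2_local_derivation_orth_zeros[OF weak_2_local zero_if_traces_nonzero] by simp
  moreover have "trace (e ** \<Delta> a) = 0" "trace (f ** \<Delta> a) = 0"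
    using weak_2_local_derivation_orth_zeros[OF weak_2_local] e_f_zero by blast+
  ultimately show "trace (m ** \<Delta> a) = 0"
    by (simp add: b_def matrix_add_rdistrib matrix_mul_cscale_left trace_add trace_cscale)
qed

end

theorem lemma2p9:
  fixes \<Delta> :: "'n::finite cmat \<Rightarrow> 'n cmat"
    and p :: "nat \<Rightarrow> 'n cmat"
    and e :: "'n cmat"
  assumes w2l: "weak_2_local_derivation \<Delta>"
    and sym: "\<forall>a. cadj (\<Delta> (cadj a)) = \<Delta> a"
    and minp: "\<forall>i\<in>{1..CARD('n)}. minimal_projection (p i)"
    and orth: "\<forall>i\<in>{1..CARD('n)}. \<forall>j\<in>{1..CARD('n)}. i \<noteq> j \<longrightarrow> p i ** p j = 0"
    and e1n: "cadj e ** e = p CARD('n)" "e ** cadj e = p 1"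
    and hq: "\<forall>a. \<Delta> ((mat 1 - p CARD('n)) ** a ** (mat 1 - p CARD('n))) = 0"
    and he: "\<Delta> e = 0"
  shows "\<forall>a. \<Delta> a = 0"
proof (cases "CARD('n) = 1")
  case True
  show ?thesis
  proof
    show "\<Delta> a = 0" for a
      by (subst matrix_card_1_eq_mat_trace[OF True])
        (simp add: weak_2_local_derivation_trace_eq_0[OF w2l])
  qed
next
  case False
  let ?P = "p CARD('n)"
  have mp: "minimal_projection ?P" "minimal_projection (p 1)" and "?P ** p 1 = 0"
    using minp orth False by auto
  then have e_range: "e ** ?P = e" "?P ** e = 0"
    using partial_isometry_orthogonal_ranges[OF e1n] by (auto simp: minimal_projection_def)
  have P: "?P ** ?P = ?P" "cadj ?P = ?P"
    using mp(1) by (simp_all add: minimal_projection_def is_projection_def)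
  interpret weak_2_local_derivation_rank_one_corner \<Delta> ?P "mat 1 - ?P" e "cadj e"
  proof
    show "?P ** x ** ?P = cscale (trace (?P ** x)) ?P" for x
      using minimal_projection_sandwich[OF mp(1)] .
    show "?P ** cadj e = cadj e" "cadj e ** ?P = 0"
      using arg_cong[OF e_range(1), of cadj] arg_cong[OF e_range(2), of cadj]
      by (simp_all add: cadj_mult P(2))
    show "\<Delta> (cadj e) = 0"
      using sym[rule_format, of "cadj e"] he by simp
    show "trace (e ** cadj e) = 1"
      using e1n(2) minimal_projection_trace[OF mp(2)] by simp
  qed (use w2l P(1) hq he e_range in simp_all)
  show ?thesis
    using vanishes by blast
qed

end
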